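(* Let $F$ be a probability distribution over $[a,\infty)$, $a\ge0$, such that $\mathrm{Rev}(F^m)<\infty$. For $b\ge a$ let $F_b$ denote the truncation of $F$ to $[a,b]$. If $\lim_{b\to\infty}\mathrm{Rev}(F_b^m)$ exists (converges), then $\lim_{b\to\infty}\mathrm{Rev}(F_b^m)=\mathrm{Rev}(F^m)$.
   Context: For a distribution $G$ on $\mathbb R_+^m$, $\mathrm{Rev}(G)$ is the supremum of the expected revenue over all (possibly randomized) incentive compatible and individually rational mechanisms for selling $m$ items to a single buyer with additive valuations whose value vector is drawn from $G$. $F^m$ denotes the product distribution (values i.i.d. from $F$). The truncation $F_b$ is the distribution on $[a,b]$ with cdf $F_b(x)=F(x)/F(b)$ for $x\in[a,b]$. *)

theory Defs
  imports "HOL-Probability.Probability"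
begin

text \<open>Value vectors for m items are functions nat => real, extensional on {..<m}.
  The buyer's possible valuations are the nonnegative vectors (R_+^m).\<close>

definition valuations :: "nat \<Rightarrow> (nat \<Rightarrow> real) set" where
  "valuations m = PiE {..<m} (\<lambda>_. {0..})"

definition dotp :: "nat \<Rightarrow> (nat \<Rightarrow> real) \<Rightarrow> (nat \<Rightarrow> real) \<Rightarrow> real" where
  "dotp m v y = (\<Sum>i<m. v i * y i)"

text \<open>A (possibly randomized) mechanism: allocation probabilities x v i in [0,1]
  and payment p v; incentive compatible and individually rational for an
  additive buyer; measurable w.r.t. the distribution G.\<close>

definition is_mechanism ::
  "nat \<Rightarrow> (nat \<Rightarrow> real) measure \<Rightarrow> ((nat \<Rightarrow> real) \<Rightarrow> nat \<Rightarrow> real) \<Rightarrow> ((nat \<Rightarrow> real) \<Rightarrow> real) \<Rightarrow> bool" where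
  "is_mechanism m G x p \<longleftrightarrow>
     p \<in> borel_measurable G \<and>
     (\<forall>i<m. (\<lambda>v. x v i) \<in> borel_measurable G) \<and>
     (\<forall>v\<in>valuations m. \<forall>i<m. 0 \<le> x v i \<and> x v i \<le> 1) \<and>
     (\<forall>v\<in>valuations m. \<forall>w\<in>valuations m.
        dotp m v (x v) - p v \<ge> dotp m v (x w) - p w) \<and>
     (\<forall>v\<in>valuations m. dotp m v (x v) - p v \<ge> 0)"

text \<open>Expected revenue (extended real), defined when the negative part of the payment
  has finite expectation (otherwise the revenue is -infinity or undefined and irrelevant).\<close>

definition exp_revenue :: "(nat \<Rightarrow> real) measure \<Rightarrow> ((nat \<Rightarrow> real) \<Rightarrow> real) \<Rightarrow> ereal" where
  "exp_revenue G p =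
     enn2ereal (\<integral>\<^sup>+ v. ennreal (p v) \<partial>G) - enn2ereal (\<integral>\<^sup>+ v. ennreal (- p v) \<partial>G)"

definition Rev :: "nat \<Rightarrow> (nat \<Rightarrow> real) measure \<Rightarrow> ereal" where
  "Rev m G = Sup {exp_revenue G p | x p.
      is_mechanism m G x p \<and> (\<integral>\<^sup>+ v. ennreal (- p v) \<partial>G) < \<infinity>}"

definition prod_dist :: "nat \<Rightarrow> real measure \<Rightarrow> (nat \<Rightarrow> real) measure" where
  "prod_dist m F = PiM {..<m} (\<lambda>_. F)"

text \<open>Truncation F_b of F (supported on [a,infinity)) to [a,b]: cdf F(x)/F(b) on [a,b],
  i.e. F conditioned on [a,b].\<close>

definition truncate_dist :: "real measure \<Rightarrow> real \<Rightarrow> real \<Rightarrow> real measure" where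
  "truncate_dist F a b = uniform_measure F {a..b}"

end

theory Submission
  imports Defs
begin

text \<open>A mechanism can be normalised so that the zero valuation pays nothing; incentive
  compatibility then makes every payment nonnegative, so \<open>Rev\<close> is a supremum of integrals of
  nonnegative payment functions. The product of the truncations \<open>F\<^sub>b\<close> is \<open>F\<^sup>m\<close> conditioned
  on the box \<open>[a,b]\<^sup>m\<close>, so the revenue of a fixed mechanism under it lies between its revenue
  restricted to the box and its full revenue divided by \<open>F([a,b])\<^sup>m\<close>. As \<open>b \<rightarrow> \<infinity>\<close> the box
  measure tends to 1 and, by monotone convergence, the restricted revenue tends to the full
  one. Hence the suprema converge.\<close>

lemma ennreal_le_divide_le_one:
  fixes x t :: ennreal
  assumes "t \<le> 1"
  shows "x \<le> x / t"
proof -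
  have "1 \<le> inverse t"
  proof (cases "t = 0")
    case False
    with assms obtain r where r: "t = ennreal r" "0 < r" "r \<le> 1"
      by (cases t) (auto simp: top_unique)
    then show ?thesis
      by (simp add: inverse_ennreal one_le_inverse flip: ennreal_1)
  qed simp
  then show ?thesis
    using mult_left_mono[of 1 "inverse t" x] by (simp add: divide_ennreal_def)
qed

lemma tendsto_nn_integral_indicator_mono:
  fixes B :: "real \<Rightarrow> 'a set"
  assumes B: "\<And>b. B b \<in> sets M" "mono B" and AE: "AE x in M. \<exists>b. x \<in> B b"
    and f: "f \<in> borel_measurable M"
  shows "((\<lambda>b. \<integral>\<^sup>+x. f x * indicator (B b) x \<partial>M) \<longlongrightarrow> (\<integral>\<^sup>+x. f x \<partial>M)) at_top"
proof -
  have integral_mono: "(\<integral>\<^sup>+x. f x * indicator (B b) x \<partial>M) \<le> (\<integral>\<^sup>+x. f x * indicator (B b') x \<partial>M)"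
    if "b \<le> b'" for b b'
    using monoD[OF B(2) that] by (intro nn_integral_mono) (auto split: split_indicator)
  have "(\<integral>\<^sup>+x. f x \<partial>M) = (\<integral>\<^sup>+x. (SUP n. f x * indicator (B (real n)) x) \<partial>M)"
  proof (rule nn_integral_cong_AE)
    show "AE x in M. f x = (SUP n. f x * indicator (B (real n)) x)"
      using AE
    proof eventually_elim
      case (elim x)
      then obtain b where "x \<in> B b" by blast
      moreover have "b \<le> real (nat \<lceil>b\<rceil>)"
        by linarith
      ultimately have "x \<in> B (real (nat \<lceil>b\<rceil>))"
        using monoD[OF B(2)] by blast
      then show ?case
        by (intro antisym SUP_upper2[of "nat \<lceil>b\<rceil>"] SUP_least) (auto split: split_indicator)
    qed
  qed
  also have "\<dots> = (SUP n. \<integral>\<^sup>+x. f x * indicator (B (real n)) x \<partial>M)"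
  proof (rule nn_integral_monotone_convergence_SUP)
    show "incseq (\<lambda>n x. f x * indicator (B (real n)) x)"
    proof (intro incseq_SucI le_funI)
      fix n x
      have "B (real n) \<subseteq> B (real (Suc n))"
        using monoD[OF B(2)] by simp
      then show "f x * indicator (B (real n)) x \<le> f x * indicator (B (real (Suc n))) x"
        by (auto split: split_indicator)
    qed
  qed (use B(1) f in measurable)
  finally have integral_eq_SUP: "(\<integral>\<^sup>+x. f x \<partial>M) = (SUP n. \<integral>\<^sup>+x. f x * indicator (B (real n)) x \<partial>M)" .
  show ?thesis
  proof (rule order_tendstoI)
    fix y assume "(\<integral>\<^sup>+x. f x \<partial>M) < y"
    moreover have "(\<integral>\<^sup>+x. f x * indicator (B b) x \<partial>M) \<le> (\<integral>\<^sup>+x. f x \<partial>M)" for b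
      by (intro nn_integral_mono) (auto split: split_indicator)
    ultimately show "\<forall>\<^sub>F b in at_top. (\<integral>\<^sup>+x. f x * indicator (B b) x \<partial>M) < y"
      by (intro always_eventually allI) (blast intro: le_less_trans)
  next
    fix y assume "y < (\<integral>\<^sup>+x. f x \<partial>M)"
    then obtain n :: nat where n: "y < (\<integral>\<^sup>+x. f x * indicator (B (real n)) x \<partial>M)"
      unfolding integral_eq_SUP by (auto simp: less_SUP_iff)
    show "\<forall>\<^sub>F b in at_top. y < (\<integral>\<^sup>+x. f x * indicator (B b) x \<partial>M)"
      using eventually_ge_at_top[of "real n"]
      by eventually_elim (use n integral_mono in \<open>blast intro: less_le_trans\<close>)
  qed
qed

lemma (in prob_space) tendsto_emeasure_mono:
  fixes B :: "real \<Rightarrow> 'a set"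
  assumes "\<And>b. B b \<in> events" "mono B" "AE x in M. \<exists>b. x \<in> B b"
  shows "((\<lambda>b. emeasure M (B b)) \<longlongrightarrow> 1) at_top"
  using tendsto_nn_integral_indicator_mono[OF assms, of "\<lambda>_. 1"] assms(1)
  by (simp add: emeasure_space_1)

lemma nn_integral_uniform_measure_le:
  assumes "f \<in> borel_measurable M" "A \<in> sets M"
  shows "(\<integral>\<^sup>+x. f x \<partial>uniform_measure M A) \<le> (\<integral>\<^sup>+x. f x \<partial>M) / emeasure M A"
  unfolding nn_integral_uniform_measure[OF assms]
  by (intro divide_right_mono_ennreal nn_integral_mono) (auto split: split_indicator)

lemma (in prob_space) nn_integral_indicator_le_uniform_measure:
  assumes "f \<in> borel_measurable M" "A \<in> events"
  shows "(\<integral>\<^sup>+x. f x * indicator A x \<partial>M) \<le> (\<integral>\<^sup>+x. f x \<partial>uniform_measure M A)"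
  unfolding nn_integral_uniform_measure[OF assms]
  by (rule ennreal_le_divide_le_one) (simp add: emeasure_eq_measure)

lemma (in prob_space) tendsto_SUP_nn_integral_uniform_measure:
  fixes B :: "real \<Rightarrow> 'a set" and f :: "'i \<Rightarrow> 'a \<Rightarrow> ennreal"
  assumes B: "\<And>b. B b \<in> events" "mono B" "AE x in M. \<exists>b. x \<in> B b"
    and f: "\<And>i. i \<in> I \<Longrightarrow> f i \<in> borel_measurable M"
  shows "((\<lambda>b. SUP i\<in>I. \<integral>\<^sup>+x. f i x \<partial>uniform_measure M (B b)) \<longlongrightarrow> (SUP i\<in>I. \<integral>\<^sup>+x. f i x \<partial>M)) at_top"
proof (rule order_tendstoI)
  fix y assume y: "(SUP i\<in>I. \<integral>\<^sup>+x. f i x \<partial>M) < y"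
  then obtain s where s: "(SUP i\<in>I. \<integral>\<^sup>+x. f i x \<partial>M) = ennreal s" "0 \<le> s"
    by (cases "SUP i\<in>I. \<integral>\<^sup>+x. f i x \<partial>M") auto
  have "((\<lambda>b. ennreal (prob (B b))) \<longlongrightarrow> ennreal 1) at_top"
    using tendsto_emeasure_mono[OF B] by (simp add: emeasure_eq_measure)
  then have prob_lim: "((\<lambda>b. prob (B b)) \<longlongrightarrow> 1) at_top"
    by (rule tendsto_ennrealD) auto
  then have "((\<lambda>b. ennreal (s / prob (B b))) \<longlongrightarrow> ennreal (s / 1)) at_top"
    by (intro tendsto_ennrealI tendsto_intros) auto
  then have "\<forall>\<^sub>F b in at_top. ennreal (s / prob (B b)) < y"
    using y s by (intro order_tendstoD(2)) auto
  moreover have "\<forall>\<^sub>F b in at_top. 0 < prob (B b)"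
    using order_tendstoD(1)[OF prob_lim] by simp
  ultimately show "\<forall>\<^sub>F b in at_top. (SUP i\<in>I. \<integral>\<^sup>+x. f i x \<partial>uniform_measure M (B b)) < y"
  proof eventually_elim
    case (elim b)
    have "(\<integral>\<^sup>+x. f i x \<partial>uniform_measure M (B b)) \<le> ennreal (s / prob (B b))" if "i \<in> I" for i
    proof -
      have "(\<integral>\<^sup>+x. f i x \<partial>uniform_measure M (B b)) \<le> (\<integral>\<^sup>+x. f i x \<partial>M) / emeasure M (B b)"
        using f[OF that] B(1) by (rule nn_integral_uniform_measure_le)
      also have "\<dots> \<le> ennreal s / emeasure M (B b)"
        unfolding s(1)[symmetric] using that by (intro divide_right_mono_ennreal SUP_upper)
      also have "\<dots> = ennreal (s / prob (B b))"
        using elim(2) s(2) by (simp add: emeasure_eq_measure divide_ennreal)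
      finally show ?thesis .
    qed
    then show ?case
      using elim(1) by (blast intro: SUP_least le_less_trans)
  qed
next
  fix y assume "y < (SUP i\<in>I. \<integral>\<^sup>+x. f i x \<partial>M)"
  then obtain i where i: "i \<in> I" "y < (\<integral>\<^sup>+x. f i x \<partial>M)"
    by (auto simp: less_SUP_iff)
  have "\<forall>\<^sub>F b in at_top. y < (\<integral>\<^sup>+x. f i x * indicator (B b) x \<partial>M)"
    using order_tendstoD(1)[OF tendsto_nn_integral_indicator_mono[OF B f[OF i(1)]] i(2)] .
  then show "\<forall>\<^sub>F b in at_top. y < (SUP i\<in>I. \<integral>\<^sup>+x. f i x \<partial>uniform_measure M (B b))"
  proof eventually_elim
    case (elim b)
    also have "(\<integral>\<^sup>+x. f i x * indicator (B b) x \<partial>M) \<le> (\<integral>\<^sup>+x. f i x \<partial>uniform_measure M (B b))"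
      using f[OF i(1)] B(1) by (rule nn_integral_indicator_le_uniform_measure)
    also have "\<dots> \<le> (SUP i\<in>I. \<integral>\<^sup>+x. f i x \<partial>uniform_measure M (B b))"
      using i(1) by (rule SUP_upper)
    finally show ?case .
  qed
qed

lemma PiM_uniform_measure:
  fixes F :: "'a measure" and I :: "'i set"
  assumes F: "prob_space F" and I: "finite I" and A: "A \<in> sets F" and A0: "emeasure F A \<noteq> 0"
  shows "PiM I (\<lambda>_. uniform_measure F A) = uniform_measure (PiM I (\<lambda>_. F)) (PiE I (\<lambda>_. A))"
proof -
  interpret F: prob_space F by fact
  interpret U: product_prob_space "\<lambda>_. uniform_measure F A" I
    using A0 by (intro product_prob_spaceI prob_space_uniform_measure) auto
  interpret FF: product_prob_space "\<lambda>_. F" I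
    by (rule product_prob_spaceI) (rule F)
  have A_pos: "0 < measure F A"
    using A0 by (simp add: F.emeasure_eq_measure zero_less_measure_iff)
  show ?thesis
  proof (rule U.PiM_eqI[symmetric, OF I])
    show "sets (uniform_measure (PiM I (\<lambda>_. F)) (PiE I (\<lambda>_. A))) = sets (PiM I (\<lambda>_. uniform_measure F A))"
      by (auto intro!: sets_PiM_cong)
  next
    fix B assume B: "\<And>i. i \<in> I \<Longrightarrow> B i \<in> sets (uniform_measure F A)"
    have "emeasure (uniform_measure (PiM I (\<lambda>_. F)) (PiE I (\<lambda>_. A))) (PiE I B)
       = emeasure (PiM I (\<lambda>_. F)) (PiE I (\<lambda>i. A \<inter> B i)) / emeasure (PiM I (\<lambda>_. F)) (PiE I (\<lambda>_. A))"
      using A B by (simp add: PiE_Int sets_PiM_I_finite I)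
    also have "\<dots> = ennreal (\<Prod>i\<in>I. measure F (A \<inter> B i)) / ennreal (\<Prod>i\<in>I. measure F A)"
      using A B I by (simp add: FF.emeasure_PiM sets.Int F.emeasure_eq_measure prod_ennreal ennreal_power)
    also have "\<dots> = ennreal (\<Prod>i\<in>I. measure F (A \<inter> B i) / measure F A)"
      using A_pos by (simp add: divide_ennreal prod_nonneg prod_dividef)
    also have "\<dots> = (\<Prod>i\<in>I. emeasure (uniform_measure F A) (B i))"
      using A B A_pos by (simp add: prod_ennreal F.emeasure_eq_measure divide_ennreal Int_commute)
    finally show "emeasure (uniform_measure (PiM I (\<lambda>_. F)) (PiE I (\<lambda>_. A))) (PiE I B)
      = (\<Prod>i\<in>I. emeasure (uniform_measure F A) (B i))" .
  qed
qed

lemma AE_PiM_PiE: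
  assumes F: "prob_space F" and I: "finite I" and A: "A \<in> sets F" "emeasure F A = 1"
  shows "AE v in PiM I (\<lambda>_. F). v \<in> PiE I (\<lambda>_. A)"
proof -
  interpret FF: product_prob_space "\<lambda>_. F" I
    by (rule product_prob_spaceI) (rule F)
  have "emeasure (PiM I (\<lambda>_. F)) (PiE I (\<lambda>_. A)) = 1"
    using A I by (simp add: FF.emeasure_PiM)
  then show ?thesis
    using A I by (subst FF.P.AE_in_set_eq_1) (auto intro!: sets_PiM_I_finite simp: FF.P.emeasure_eq_measure)
qed

definition nonneg_payments :: "nat \<Rightarrow> (nat \<Rightarrow> real) measure \<Rightarrow> ((nat \<Rightarrow> real) \<Rightarrow> real) set" where
  "nonneg_payments m G = {p. (\<exists>x. is_mechanism m G x p) \<and> (\<forall>v. 0 \<le> p v)}"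

lemma is_mechanism_cong_sets:
  assumes "sets G = sets G'"
  shows "is_mechanism m G = is_mechanism m G'"
proof -
  have "measurable G borel = measurable G' borel"
    using assms by (rule measurable_cong_sets) simp
  then show ?thesis
    unfolding is_mechanism_def[abs_def] by (rule arg_cong)
qed

lemma nonneg_payments_cong_sets:
  assumes "sets G = sets G'"
  shows "nonneg_payments m G = nonneg_payments m G'"
  unfolding nonneg_payments_def is_mechanism_cong_sets[OF assms] ..

lemma zero_payment_in_nonneg_payments: "(\<lambda>_. 0) \<in> nonneg_payments m G"
proof -
  have "is_mechanism m G (\<lambda>_ _. 0) (\<lambda>_. 0)"
    by (simp add: is_mechanism_def dotp_def)
  then show ?thesis
    unfolding nonneg_payments_def by blast
qed

lemma is_mechanism_payment_zero_valuation:
  assumes "is_mechanism m G x p"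
  defines "z \<equiv> \<lambda>_\<in>{..<m}. 0"
  shows "p z \<le> 0" and "\<And>v. v \<in> valuations m \<Longrightarrow> p z \<le> p v"
proof -
  have z: "z \<in> valuations m" and dotp_z: "\<And>y. dotp m z y = 0"
    by (auto simp: z_def valuations_def dotp_def)
  have "0 \<le> dotp m z (x z) - p z"
    using assms(1) z unfolding is_mechanism_def by blast
  then show "p z \<le> 0"
    by (simp add: dotp_z)
  show "p z \<le> p v" if "v \<in> valuations m" for v
  proof -
    have "dotp m z (x v) - p v \<le> dotp m z (x z) - p z"
      using assms(1) z that unfolding is_mechanism_def by blast
    then show ?thesis
      by (simp add: dotp_z)
  qed
qed

lemma is_mechanism_shift_payment:
  assumes mech: "is_mechanism m G x p"
  defines "z \<equiv> \<lambda>_\<in>{..<m}. 0"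
  shows "is_mechanism m G x (\<lambda>v. max 0 (p v - p z))"
proof -
  have z: "z \<in> valuations m"
    by (auto simp: z_def valuations_def)
  have shift: "max 0 (p v - p z) = p v - p z" if "v \<in> valuations m" for v
    using is_mechanism_payment_zero_valuation(2)[OF mech that] by (simp add: z_def)
  have dotp_nonneg: "0 \<le> dotp m v (x z)" if "v \<in> valuations m" for v
    using mech that z unfolding is_mechanism_def dotp_def valuations_def
    by (intro sum_nonneg) (auto simp: PiE_def Pi_def)
  have IC_z: "dotp m v (x z) - p z \<le> dotp m v (x v) - p v" if "v \<in> valuations m" for v
    using mech that z unfolding is_mechanism_def by blast
  have IR: "p v - p z \<le> dotp m v (x v)" if "v \<in> valuations m" for v
    using dotp_nonneg[OF that] IC_z[OF that] by linarith
  have "(\<lambda>v. max 0 (p v - p z)) \<in> borel_measurable G"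
    using mech unfolding is_mechanism_def by (intro borel_measurable_max borel_measurable_diff) auto
  with mech show ?thesis
    unfolding is_mechanism_def by (simp add: shift IR)
qed

lemma Rev_eq_SUP_nonneg_payments:
  assumes AE: "AE v in G. v \<in> valuations m"
  shows "Rev m G = enn2ereal (SUP p\<in>nonneg_payments m G. \<integral>\<^sup>+v. ennreal (p v) \<partial>G)"
proof -
  let ?R = "\<lambda>p. enn2ereal (\<integral>\<^sup>+v. ennreal (p v) \<partial>G)"
  have "Rev m G = (SUP p\<in>nonneg_payments m G. ?R p)"
  proof (rule antisym)
    show "Rev m G \<le> (SUP p\<in>nonneg_payments m G. ?R p)"
      unfolding Rev_def
    proof (rule Sup_least, clarify)
      fix x p assume mech: "is_mechanism m G x p"
      define z :: "nat \<Rightarrow> real" where "z = (\<lambda>_\<in>{..<m}. 0)"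
      define p' where "p' = (\<lambda>v. max 0 (p v - p z))"
      have "p' \<in> nonneg_payments m G"
        using is_mechanism_shift_payment[OF mech] by (auto simp: nonneg_payments_def p'_def z_def)
      have "p z \<le> 0"
        using is_mechanism_payment_zero_valuation(1)[OF mech] by (simp add: z_def)
      have "AE v in G. ennreal (p v) \<le> ennreal (p' v)"
        using AE by eventually_elim (use \<open>p z \<le> 0\<close> in \<open>simp add: p'_def ennreal_leI\<close>)
      then have "(\<integral>\<^sup>+v. ennreal (p v) \<partial>G) \<le> (\<integral>\<^sup>+v. ennreal (p' v) \<partial>G)"
        by (rule nn_integral_mono_AE)
      then have "exp_revenue G p \<le> ?R p'"
        unfolding exp_revenue_def
        by (intro order_trans[OF ereal_diff_le_self]) (simp_all add: less_eq_ennreal.rep_eq)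
      also have "\<dots> \<le> (SUP p\<in>nonneg_payments m G. ?R p)"
        using \<open>p' \<in> nonneg_payments m G\<close> by (rule SUP_upper)
      finally show "exp_revenue G p \<le> (SUP p\<in>nonneg_payments m G. ?R p)" .
    qed
  next
    show "(SUP p\<in>nonneg_payments m G. ?R p) \<le> Rev m G"
    proof (rule SUP_least)
      fix p assume "p \<in> nonneg_payments m G"
      then obtain x where mech: "is_mechanism m G x p" and nonneg: "\<And>v. 0 \<le> p v"
        by (auto simp: nonneg_payments_def)
      have "(\<integral>\<^sup>+v. ennreal (- p v) \<partial>G) = 0"
        using nonneg by (simp add: ennreal_neg)
      then have "exp_revenue G p = ?R p" and "(\<integral>\<^sup>+v. ennreal (- p v) \<partial>G) < \<infinity>"
        by (simp_all add: exp_revenue_def zero_ennreal.rep_eq)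
      with mech show "?R p \<le> Rev m G"
        unfolding Rev_def by (intro Sup_upper CollectI exI[of _ x] exI[of _ p]) simp
    qed
  qed
  also have "\<dots> = enn2ereal (SUP p\<in>nonneg_payments m G. \<integral>\<^sup>+v. ennreal (p v) \<partial>G)"
    unfolding Sup_ennreal.rep_eq image_image comp_def
    using zero_payment_in_nonneg_payments[of m G]
    by (intro sup_absorb2[symmetric] SUP_upper2[of "\<lambda>_. 0"]) auto
  finally show ?thesis .
qed

lemma prod_dist_truncate_dist:
  assumes "prob_space F" "sets F = sets borel" "emeasure F {a..b} \<noteq> 0"
  shows "prod_dist m (truncate_dist F a b) = uniform_measure (prod_dist m F) (PiE {..<m} (\<lambda>_. {a..b}))"
  unfolding prod_dist_def truncate_dist_def using assms by (intro PiM_uniform_measure) auto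

lemma eventually_emeasure_atLeastAtMost_nonzero:
  fixes F :: "real measure"
  assumes "prob_space F" "sets F = sets borel" "F {a..} = 1"
  shows "\<forall>\<^sub>F b in at_top. emeasure F {a..b} \<noteq> 0"
proof -
  interpret F: prob_space F by fact
  have "AE x in F. \<exists>b. x \<in> {a..b}"
    using assms(2,3) F.AE_in_set_eq_1[of "{a..}"] by (auto simp: F.emeasure_eq_measure)
  then have "((\<lambda>b. emeasure F {a..b}) \<longlongrightarrow> 1) at_top"
    using assms(2) by (intro F.tendsto_emeasure_mono) (auto intro: monoI)
  then have "\<forall>\<^sub>F b in at_top. 0 < emeasure F {a..b}"
    by (rule order_tendstoD(1)) simp
  then show ?thesis
    by (rule eventually_mono) simp
qed

lemma AE_prod_dist_PiE_atLeast:
  assumes "prob_space F" "sets F = sets borel" "F {a..} = 1"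
  shows "AE v in prod_dist m F. v \<in> PiE {..<m} (\<lambda>_. {a..})"
  unfolding prod_dist_def using assms by (intro AE_PiM_PiE) auto

lemma AE_prod_dist_valuations:
  assumes "prob_space F" "sets F = sets borel" "F {a..} = 1" "0 \<le> a"
  shows "AE v in prod_dist m F. v \<in> valuations m"
  using AE_prod_dist_PiE_atLeast[OF assms(1-3)]
  by eventually_elim (use assms(4) in \<open>auto simp: valuations_def PiE_iff intro: order_trans\<close>)

lemma AE_prod_dist_in_box:
  assumes "prob_space F" "sets F = sets borel" "F {a..} = 1"
  shows "AE v in prod_dist m F. \<exists>b. v \<in> PiE {..<m} (\<lambda>_. {a..b})"
  using AE_prod_dist_PiE_atLeast[OF assms]
proof eventually_elim
  case (elim v)
  then have "v \<in> PiE {..<m} (\<lambda>_. {a..Max (insert a (v ` {..<m}))})"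
    by (auto simp: PiE_iff)
  then show ?case ..
qed

lemma Rev_prod_dist_truncate_dist:
  assumes "prob_space F" "sets F = sets borel" "F {a..} = 1" "0 \<le> a" "emeasure F {a..b} \<noteq> 0"
  shows "Rev m (prod_dist m (truncate_dist F a b))
    = enn2ereal (SUP p\<in>nonneg_payments m (prod_dist m F).
        \<integral>\<^sup>+v. ennreal (p v) \<partial>uniform_measure (prod_dist m F) (PiE {..<m} (\<lambda>_. {a..b})))"
proof -
  have "PiE {..<m} (\<lambda>_. {a..b}) \<in> sets (prod_dist m F)"
    unfolding prod_dist_def using assms(2) by (auto intro!: sets_PiM_I_finite)
  then have "AE v in uniform_measure (prod_dist m F) (PiE {..<m} (\<lambda>_. {a..b})). v \<in> valuations m"
    by (rule AE_uniform_measureI) (rule eventually_mono[OF AE_prod_dist_valuations[OF assms(1-4)]], simp)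
  moreover have "nonneg_payments m (uniform_measure (prod_dist m F) (PiE {..<m} (\<lambda>_. {a..b})))
      = nonneg_payments m (prod_dist m F)"
    by (rule nonneg_payments_cong_sets) simp
  ultimately show ?thesis
    unfolding prod_dist_truncate_dist[OF assms(1,2,5)] by (simp add: Rev_eq_SUP_nonneg_payments)
qed

theorem theorem5:
  fixes F :: "real measure" and a :: real and m :: nat
  assumes "prob_space F"
    and "sets F = sets borel"
    and "a \<ge> 0"
    and "F {a..} = 1"
    and "Rev m (prod_dist m F) < \<infinity>"
    and "\<exists>L::real. ((\<lambda>b. Rev m (prod_dist m (truncate_dist F a b))) \<longlongrightarrow> ereal L) at_top"
  shows "((\<lambda>b. Rev m (prod_dist m (truncate_dist F a b))) \<longlongrightarrow> Rev m (prod_dist m F)) at_top"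
proof -
  define Fm where "Fm = prod_dist m F"
  define cube where "cube b = PiE {..<m} (\<lambda>_. {a..b})" for b
  define P where "P = nonneg_payments m Fm"
  interpret Fm: prob_space Fm
    unfolding Fm_def prod_dist_def by (intro prob_space_PiM assms(1))
  have "((\<lambda>b. SUP p\<in>P. \<integral>\<^sup>+v. ennreal (p v) \<partial>uniform_measure Fm (cube b))
      \<longlongrightarrow> (SUP p\<in>P. \<integral>\<^sup>+v. ennreal (p v) \<partial>Fm)) at_top"
  proof (rule Fm.tendsto_SUP_nn_integral_uniform_measure)
    show "cube b \<in> Fm.events" for b
      unfolding cube_def Fm_def prod_dist_def using assms(2) by (auto intro!: sets_PiM_I_finite)
    show "mono cube"
      unfolding cube_def by (intro monoI PiE_mono) auto
    show "AE v in Fm. \<exists>b. v \<in> cube b"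
      unfolding Fm_def cube_def using assms(1,2,4) by (rule AE_prod_dist_in_box)
  qed (simp add: P_def nonneg_payments_def is_mechanism_def)
  moreover have "Rev m Fm = enn2ereal (SUP p\<in>P. \<integral>\<^sup>+v. ennreal (p v) \<partial>Fm)"
    unfolding Fm_def P_def using AE_prod_dist_valuations[OF assms(1,2,4,3)]
    by (rule Rev_eq_SUP_nonneg_payments)
  ultimately have "((\<lambda>b. enn2ereal (SUP p\<in>P. \<integral>\<^sup>+v. ennreal (p v) \<partial>uniform_measure Fm (cube b)))
      \<longlongrightarrow> Rev m Fm) at_top"
    by simp
  moreover have "\<forall>\<^sub>F b in at_top. enn2ereal (SUP p\<in>P. \<integral>\<^sup>+v. ennreal (p v) \<partial>uniform_measure Fm (cube b))
      = Rev m (prod_dist m (truncate_dist F a b))"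
    using eventually_emeasure_atLeastAtMost_nonzero[OF assms(1,2,4)]
    unfolding Fm_def P_def cube_def
    by eventually_elim (rule Rev_prod_dist_truncate_dist[symmetric, OF assms(1,2,4,3)])
  ultimately show ?thesis
    unfolding Fm_def by (rule Lim_transform_eventually)
qed

end
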